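(* Let $G$ be a group and $f$ a circular homogeneous quasimorphism on $G$. (i) There exists a left-invariant total order $\preceq$ on $G$ such that the growth functions of the order induced by $\preceq$ via the left action of $G$ on itself are multiples of $f$. (ii) There exists a quasi-total triple $(G,\preceq_0,T)$ realizing $f$ such that $\preceq_0$ can be refined to a left-invariant total order $\preceq$ on $G$. (iii) If $f$ is unbounded on the center of $G$, then there exists a total triple $(G,\preceq,T)$ realizing $f$.
   Context: ${\rm Homeo}^+_{\mathbb{Z}}(\mathbb{R})$ denotes the group of orientation-preserving homeomorphisms of $\mathbb{R}$ commuting with $x\mapsto x+1$, and $T_{\mathbb{R}}(\phi)=\lim_{n\to\infty}\frac{\phi^n(0)}{n}$ is the translation number on it. A nonzero homogeneous quasimorphism $f$ on $G$ is circular if there is an injective homomorphism $\phi:G\to{\rm Homeo}^+_{\mathbb{Z}}(\mathbb{R})$ with $f=T_{\mathbb{R}}\circ\phi$. For a poset $(X,\preceq)$, an order-preserving bijection $T$ is dominant if for all $a,b$ some $n\in\mathbb{N}$ has $T^na\succ b$; $(X,\preceq,T)$ is a quasi-total triple if $T$ is dominant and for some $N\in\mathbb{N}$, for all $a,b$ there is $k\in\{0,\dots,N\}$ with $a\preceq T^kb$ or $b\preceq T^ka$; it is a total triple if moreover $\preceq$ is total. Given a group action on a poset $(X,\preceq)$, the induced order on $G$ is $g\leq h\Leftrightarrow\forall k\in G\,\forall x:(kg).x\preceq(kh).x$; for a bi-invariant order $\leq$ and a dominant $g$ ($g\geq e$, $g\ne e$, every $h$ has $g^n\geq h$ for some $n\geq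 0$), the growth function is $\gamma_g(h)=\lim_n\frac1n\inf\{p\in\mathbb{Z}:g^p\geq h^n\}$. A triple $(G,\preceq,T)$ realizes $f$ if the left multiplication action of $G$ on $G$ is by order-preserving maps commuting with $T$, effective and dominating (some $g,x,n\in\mathbb{N}$ with $gx\succeq T^nx$), and the growth functions of the induced order on $G$ are multiples of $f$. A refinement of a partial order $\preceq_0$ is a partial order $\preceq$ with $a\preceq_0 b\Rightarrow a\preceq b$. *)

theory Defs
  imports "HOL-Analysis.Analysis" "HOL-Algebra.Group"
begin

definition homeo_Z :: "(real \<Rightarrow> real) \<Rightarrow> bool" where
  "homeo_Z \<phi> \<longleftrightarrow> (\<exists>\<psi>. homeomorphism UNIV UNIV \<phi> \<psi>) \<and> mono \<phi> \<and> (\<forall>x. \<phi> (x + 1) = \<phi> x + 1)"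

definition transl_num :: "(real \<Rightarrow> real) \<Rightarrow> real" where
  "transl_num \<phi> = lim (\<lambda>n. (\<phi> ^^ n) 0 / real n)"

definition quasimorphism :: "('a, 'b) monoid_scheme \<Rightarrow> ('a \<Rightarrow> real) \<Rightarrow> bool" where
  "quasimorphism G f \<longleftrightarrow>
     (\<exists>D. \<forall>g\<in>carrier G. \<forall>h\<in>carrier G. \<bar>f (g \<otimes>\<^bsub>G\<^esub> h) - f g - f h\<bar> \<le> D)"

definition homogeneous_qm :: "('a, 'b) monoid_scheme \<Rightarrow> ('a \<Rightarrow> real) \<Rightarrow> bool" where
  "homogeneous_qm G f \<longleftrightarrow> quasimorphism G f \<and>
     (\<forall>g\<in>carrier G. \<forall>n::int. f (g [^]\<^bsub>G\<^esub> n) = of_int n * f g)"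

definition circular_qm :: "('a, 'b) monoid_scheme \<Rightarrow> ('a \<Rightarrow> real) \<Rightarrow> bool" where
  "circular_qm G f \<longleftrightarrow> homogeneous_qm G f \<and> (\<exists>g\<in>carrier G. f g \<noteq> 0) \<and>
     (\<exists>\<phi>. (\<forall>g\<in>carrier G. homeo_Z (\<phi> g)) \<and>
          (\<forall>g\<in>carrier G. \<forall>h\<in>carrier G. \<phi> (g \<otimes>\<^bsub>G\<^esub> h) = \<phi> g \<circ> \<phi> h) \<and>
          inj_on \<phi> (carrier G) \<and>
          (\<forall>g\<in>carrier G. f g = transl_num (\<phi> g)))"

definition group_center :: "('a, 'b) monoid_scheme \<Rightarrow> 'a set" where
  "group_center G = {z \<in> carrier G. \<forall>g\<in>carrier G. z \<otimes>\<^bsub>G\<^esub> g = g \<otimes>\<^bsub>G\<^esub> z}"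

definition partial_order_on_carrier :: "'a set \<Rightarrow> ('a \<Rightarrow> 'a \<Rightarrow> bool) \<Rightarrow> bool" where
  "partial_order_on_carrier X rel \<longleftrightarrow>
     (\<forall>a\<in>X. rel a a) \<and>
     (\<forall>a\<in>X. \<forall>b\<in>X. rel a b \<and> rel b a \<longrightarrow> a = b) \<and>
     (\<forall>a\<in>X. \<forall>b\<in>X. \<forall>c\<in>X. rel a b \<and> rel b c \<longrightarrow> rel a c)"

definition total_order_on_carrier :: "'a set \<Rightarrow> ('a \<Rightarrow> 'a \<Rightarrow> bool) \<Rightarrow> bool" where
  "total_order_on_carrier X rel \<longleftrightarrow> partial_order_on_carrier X rel \<and>
     (\<forall>a\<in>X. \<forall>b\<in>X. rel a b \<or> rel b a)"

definition left_invariant :: "('a, 'b) monoid_scheme \<Rightarrow> ('a \<Rightarrow> 'a \<Rightarrow> bool) \<Rightarrow> bool" where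
  "left_invariant G rel \<longleftrightarrow>
     (\<forall>g\<in>carrier G. \<forall>a\<in>carrier G. \<forall>b\<in>carrier G. rel a b \<longrightarrow> rel (g \<otimes>\<^bsub>G\<^esub> a) (g \<otimes>\<^bsub>G\<^esub> b))"

definition left_inv_total_order :: "('a, 'b) monoid_scheme \<Rightarrow> ('a \<Rightarrow> 'a \<Rightarrow> bool) \<Rightarrow> bool" where
  "left_inv_total_order G rel \<longleftrightarrow> total_order_on_carrier (carrier G) rel \<and> left_invariant G rel"

definition refines :: "'a set \<Rightarrow> ('a \<Rightarrow> 'a \<Rightarrow> bool) \<Rightarrow> ('a \<Rightarrow> 'a \<Rightarrow> bool) \<Rightarrow> bool" where
  "refines X rel rel0 \<longleftrightarrow> partial_order_on_carrier X rel \<and>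
     (\<forall>a\<in>X. \<forall>b\<in>X. rel0 a b \<longrightarrow> rel a b)"

text \<open>g <= h iff for all k, x: (k g).x \<preceq> (k h).x, the action being left multiplication.\<close>
definition induced_le :: "('a, 'b) monoid_scheme \<Rightarrow> ('a \<Rightarrow> 'a \<Rightarrow> bool) \<Rightarrow> 'a \<Rightarrow> 'a \<Rightarrow> bool" where
  "induced_le G rel g h \<longleftrightarrow>
     (\<forall>k\<in>carrier G. \<forall>x\<in>carrier G. rel ((k \<otimes>\<^bsub>G\<^esub> g) \<otimes>\<^bsub>G\<^esub> x) ((k \<otimes>\<^bsub>G\<^esub> h) \<otimes>\<^bsub>G\<^esub> x))"

definition dominant_elem :: "('a, 'b) monoid_scheme \<Rightarrow> ('a \<Rightarrow> 'a \<Rightarrow> bool) \<Rightarrow> 'a \<Rightarrow> bool" where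
  "dominant_elem G leq g \<longleftrightarrow> g \<in> carrier G \<and> leq \<one>\<^bsub>G\<^esub> g \<and> g \<noteq> \<one>\<^bsub>G\<^esub> \<and>
     (\<forall>h\<in>carrier G. \<exists>n::nat. leq h (g [^]\<^bsub>G\<^esub> n))"

text \<open>The sequence (1/n) inf {p in Z. g^p >= h^n}, whose limit is the growth function.\<close>
definition growth_seq :: "('a, 'b) monoid_scheme \<Rightarrow> ('a \<Rightarrow> 'a \<Rightarrow> bool) \<Rightarrow> 'a \<Rightarrow> 'a \<Rightarrow> nat \<Rightarrow> real" where
  "growth_seq G leq g h n =
     real_of_int (Inf {p::int. leq (h [^]\<^bsub>G\<^esub> n) (g [^]\<^bsub>G\<^esub> p)}) / real n"

definition growth_multiples :: "('a, 'b) monoid_scheme \<Rightarrow> ('a \<Rightarrow> 'a \<Rightarrow> bool) \<Rightarrow> ('a \<Rightarrow> real) \<Rightarrow> bool" where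
  "growth_multiples G leq f \<longleftrightarrow>
     (\<forall>g. dominant_elem G leq g \<longrightarrow>
        (\<exists>c::real. \<forall>h\<in>carrier G. growth_seq G leq g h \<longlonglongrightarrow> c * f h))"

definition order_preserving_bij :: "'a set \<Rightarrow> ('a \<Rightarrow> 'a \<Rightarrow> bool) \<Rightarrow> ('a \<Rightarrow> 'a) \<Rightarrow> bool" where
  "order_preserving_bij X rel T \<longleftrightarrow> bij_betw T X X \<and>
     (\<forall>a\<in>X. \<forall>b\<in>X. rel a b \<longrightarrow> rel (T a) (T b))"

definition dominant_map :: "'a set \<Rightarrow> ('a \<Rightarrow> 'a \<Rightarrow> bool) \<Rightarrow> ('a \<Rightarrow> 'a) \<Rightarrow> bool" where
  "dominant_map X rel T \<longleftrightarrow> order_preserving_bij X rel T \<and>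
     (\<forall>a\<in>X. \<forall>b\<in>X. \<exists>n::nat. n \<ge> 1 \<and> rel b ((T ^^ n) a) \<and> (T ^^ n) a \<noteq> b)"

definition quasi_total_triple :: "'a set \<Rightarrow> ('a \<Rightarrow> 'a \<Rightarrow> bool) \<Rightarrow> ('a \<Rightarrow> 'a) \<Rightarrow> bool" where
  "quasi_total_triple X rel T \<longleftrightarrow> partial_order_on_carrier X rel \<and> dominant_map X rel T \<and>
     (\<exists>N::nat. \<forall>a\<in>X. \<forall>b\<in>X. \<exists>k\<le>N. rel a ((T ^^ k) b) \<or> rel b ((T ^^ k) a))"

definition total_triple :: "'a set \<Rightarrow> ('a \<Rightarrow> 'a \<Rightarrow> bool) \<Rightarrow> ('a \<Rightarrow> 'a) \<Rightarrow> bool" where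
  "total_triple X rel T \<longleftrightarrow> quasi_total_triple X rel T \<and> total_order_on_carrier X rel"

definition realizes :: "('a, 'b) monoid_scheme \<Rightarrow> ('a \<Rightarrow> 'a \<Rightarrow> bool) \<Rightarrow> ('a \<Rightarrow> 'a) \<Rightarrow> ('a \<Rightarrow> real) \<Rightarrow> bool" where
  "realizes G rel T f \<longleftrightarrow>
     left_invariant G rel \<and>
     (\<forall>g\<in>carrier G. \<forall>x\<in>carrier G. T (g \<otimes>\<^bsub>G\<^esub> x) = g \<otimes>\<^bsub>G\<^esub> T x) \<and>
     (\<forall>g\<in>carrier G. (\<forall>x\<in>carrier G. g \<otimes>\<^bsub>G\<^esub> x = x) \<longrightarrow> g = \<one>\<^bsub>G\<^esub>) \<and>
     (\<exists>g\<in>carrier G. \<exists>x\<in>carrier G. \<exists>n::nat. n \<ge> 1 \<and> rel ((T ^^ n) x) (g \<otimes>\<^bsub>G\<^esub> x)) \<and>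
     growth_multiples G (induced_le G rel) f"

end

theory Submission
  imports Defs
begin

text \<open>Let \<open>\<phi>\<close> realise \<open>f\<close> as translation numbers. Then \<open>\<phi> (g [^] p)\<close> moves every point by
  \<open>p * f g\<close> up to an error of 2, so for any order on \<open>G\<close> lying between "\<open>\<phi> a < \<phi> b\<close>
  everywhere" and "\<open>\<phi> a 0 \<le> \<phi> b 0\<close>", comparing \<open>h [^] n\<close> with \<open>g [^] p\<close> amounts, up to a
  bounded error, to comparing \<open>n * f h\<close> with \<open>p * f g\<close>; hence its growth functions are
  \<open>f / f g\<close>. Two such orders do the job. The partial order "\<open>\<phi> a < \<phi> b\<close> everywhere",
  with right multiplication by some \<open>t\<close> with \<open>f t > 0\<close>, is a quasi-total triple. It is refined
  by comparing \<open>\<phi> a\<close> and \<open>\<phi> b\<close> lexicographically along an enumeration of \<open>\<rat>\<close>, a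
  left-invariant total order because the \<open>\<phi> g\<close> are continuous and \<open>\<phi>\<close> is injective. If \<open>f\<close>
  is unbounded on the centre, \<open>t\<close> can be chosen central, and then right multiplication by
  \<open>t\<close> preserves the lexicographic order as well, giving a total triple.\<close>

definition degree_one :: "(real \<Rightarrow> real) \<Rightarrow> bool" where
  "degree_one F \<longleftrightarrow> mono F \<and> (\<forall>x. F (x + 1) = F x + 1)"

lemma homeo_Z_imp_degree_one: "homeo_Z F \<Longrightarrow> degree_one F"
  by (simp add: homeo_Z_def degree_one_def)

lemma homeo_Z_continuous: "homeo_Z F \<Longrightarrow> continuous_on UNIV F"
  unfolding homeo_Z_def homeomorphism_def by blast

lemma homeo_Z_strict_mono: "homeo_Z F \<Longrightarrow> strict_mono F"
proof (rule strict_monoI)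
  fix x y :: real
  assume F: "homeo_Z F" and "x < y"
  then have "F x \<le> F y" by (simp add: homeo_Z_def mono_def)
  moreover have "inj F"
    using F unfolding homeo_Z_def homeomorphism_def by (metis UNIV_I injI)
  then have "F x \<noteq> F y" using \<open>x < y\<close> by (metis injD less_irrefl)
  ultimately show "F x < F y" by simp
qed

lemma degree_one_funpow: "degree_one F \<Longrightarrow> degree_one (F ^^ n)"
  by (induction n) (auto simp: degree_one_def mono_def)

lemma degree_one_add_nat: "degree_one F \<Longrightarrow> F (x + real k) = F x + real k"
proof (induction k arbitrary: x)
  case (Suc k)
  have "F (x + real (Suc k)) = F ((x + real k) + 1)" by (simp add: algebra_simps)
  also have "\<dots> = F (x + real k) + 1" using Suc.prems by (simp add: degree_one_def)
  finally show ?case using Suc by simp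
qed simp

lemma degree_one_add_int: "degree_one F \<Longrightarrow> F (x + of_int k) = F x + of_int k"
  using degree_one_add_nat[of F x "nat k"] degree_one_add_nat[of F "x + of_int k" "nat (- k)"]
  by (cases "k \<ge> 0") auto

lemma degree_one_displacement:
  assumes F: "degree_one F"
  shows "\<bar>F y - y - F 0\<bar> \<le> 1"
proof -
  define r where "r = y - of_int \<lfloor>y\<rfloor>"
  have r: "0 \<le> r" "r < 1" unfolding r_def by linarith+
  have "F y = F r + of_int \<lfloor>y\<rfloor>"
    using degree_one_add_int[OF F, of r "\<lfloor>y\<rfloor>"] by (simp add: r_def)
  moreover have "F 0 \<le> F r" "F r \<le> F 1" "F 1 = F 0 + 1"
    using F r unfolding degree_one_def mono_def by (metis add_0 less_imp_le)+
  ultimately show ?thesis using r unfolding r_def by linarith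
qed

lemma degree_one_funpow_mult:
  assumes F: "degree_one F"
  shows "\<bar>(F ^^ (m * n)) 0 - real m * (F ^^ n) 0\<bar> \<le> real m"
proof (induction m)
  case (Suc m)
  have "(F ^^ (Suc m * n)) 0 = (F ^^ n) ((F ^^ (m * n)) 0)" by (simp add: funpow_add)
  then have "\<bar>(F ^^ (Suc m * n)) 0 - (F ^^ (m * n)) 0 - (F ^^ n) 0\<bar> \<le> 1"
    using degree_one_displacement[OF degree_one_funpow[OF F]] by metis
  then show ?case using Suc by (simp add: algebra_simps)
qed simp

lemma degree_one_funpow_mult_close:
  assumes F: "degree_one F" and "m \<ge> 1" "n \<ge> 1"
  shows "\<bar>(F ^^ (m * n)) 0 / real (m * n) - (F ^^ n) 0 / real n\<bar> \<le> 1 / real n"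
proof -
  have pos: "real m > 0" "real n > 0" using assms by auto
  have "\<bar>(F ^^ (m * n)) 0 / real (m * n) - (F ^^ n) 0 / real n\<bar>
      = \<bar>(F ^^ (m * n)) 0 - real m * (F ^^ n) 0\<bar> / (real m * real n)"
    using pos by (simp add: field_simps abs_divide)
  also have "\<dots> \<le> real m / (real m * real n)"
    using degree_one_funpow_mult[OF F, of m n] pos by (intro divide_right_mono) auto
  also have "\<dots> = 1 / real n" using pos by simp
  finally show ?thesis .
qed

lemma degree_one_Cauchy: "degree_one F \<Longrightarrow> Cauchy (\<lambda>n. (F ^^ n) 0 / real n)"
proof (rule metric_CauchyI)
  fix e :: real
  assume F: "degree_one F" and e: "e > 0"
  define b where "b n = (F ^^ n) 0 / real n" for n
  obtain M :: nat where M: "real M > 2 / e" using reals_Archimedean2 by blast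
  moreover have "2 / e > 0" using e by simp
  ultimately have M1: "M \<ge> 1" by linarith
  have Me: "1 / real M < e / 2" using M M1 e by (simp add: field_simps)
  have "dist (b m) (b n) < e" if "m \<ge> M" "n \<ge> M" for m n
  proof -
    have "\<bar>b (n * m) - b m\<bar> \<le> 1 / real m" "\<bar>b (m * n) - b n\<bar> \<le> 1 / real n"
      using degree_one_funpow_mult_close[OF F] that M1 by (simp_all add: b_def)
    moreover have "1 / real m \<le> 1 / real M" "1 / real n \<le> 1 / real M"
      using that M1 by (simp_all add: frac_le)
    ultimately show ?thesis using Me by (simp add: dist_real_def mult.commute)
  qed
  then show "\<exists>M. \<forall>m\<ge>M. \<forall>n\<ge>M. dist ((F ^^ m) 0 / real m) ((F ^^ n) 0 / real n) < e"
    unfolding b_def by blast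
qed

lemma degree_one_funpow_transl:
  assumes F: "degree_one F"
  shows "\<bar>(F ^^ n) 0 - real n * lim (\<lambda>k. (F ^^ k) 0 / real k)\<bar> \<le> 1"
proof (cases "n = 0")
  case False
  define b where "b = (\<lambda>k. (F ^^ k) 0 / real k)"
  have "b \<longlonglongrightarrow> lim b"
    using degree_one_Cauchy[OF F] unfolding b_def by (simp add: Cauchy_convergent_iff convergent_LIMSEQ_iff)
  moreover have "strict_mono (\<lambda>m. Suc m * n)" using False by (intro strict_monoI) simp
  ultimately have "(\<lambda>m. b (Suc m * n)) \<longlonglongrightarrow> lim b"
    using LIMSEQ_subseq_LIMSEQ by (fastforce simp: o_def)
  then have "(\<lambda>m. \<bar>b (Suc m * n) - b n\<bar>) \<longlonglongrightarrow> \<bar>lim b - b n\<bar>"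
    by (intro tendsto_intros)
  then have "\<bar>lim b - b n\<bar> \<le> 1 / real n"
  proof (rule Lim_bounded[of _ _ 0], intro allI impI)
    fix m :: nat
    show "\<bar>b (Suc m * n) - b n\<bar> \<le> 1 / real n"
      using degree_one_funpow_mult_close[OF F, of "Suc m" n] False unfolding b_def by simp
  qed
  then have "real n * \<bar>lim b - b n\<bar> \<le> 1"
    using False by (simp add: field_simps)
  moreover have "real n * \<bar>lim b - b n\<bar> = \<bar>(F ^^ n) 0 - real n * lim b\<bar>"
  proof -
    have "real n * \<bar>lim b - b n\<bar> = \<bar>real n * (lim b - b n)\<bar>" by (simp add: abs_mult)
    also have "real n * (lim b - b n) = real n * lim b - (F ^^ n) 0"
      using False by (simp add: b_def right_diff_distrib)
    finally show ?thesis by (simp add: abs_minus_commute)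
  qed
  ultimately show ?thesis by (simp add: b_def)
qed simp

lemma homeo_Z_funpow_transl_num:
  assumes "homeo_Z F"
  shows "\<bar>(F ^^ n) y - y - real n * transl_num F\<bar> \<le> 2"
proof -
  have F: "degree_one F" using assms by (rule homeo_Z_imp_degree_one)
  have "\<bar>(F ^^ n) y - y - (F ^^ n) 0\<bar> \<le> 1"
    by (rule degree_one_displacement[OF degree_one_funpow[OF F]])
  moreover have "\<bar>(F ^^ n) 0 - real n * transl_num F\<bar> \<le> 1"
    using degree_one_funpow_transl[OF F, of n] by (simp add: transl_num_def)
  ultimately show ?thesis by linarith
qed

text \<open>An enumeration of \<open>\<rat>\<close> starting with \<open>0\<close>, so that the lexicographic order below
  refines the comparison of values at \<open>0\<close>.\<close>
definition rat_enum :: "nat \<Rightarrow> real" where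
  "rat_enum n = (if n = 0 then 0 else from_nat_into \<rat> (n - 1))"

definition lex_less :: "(real \<Rightarrow> real) \<Rightarrow> (real \<Rightarrow> real) \<Rightarrow> bool" where
  "lex_less F H \<longleftrightarrow>
     (\<exists>n. F (rat_enum n) < H (rat_enum n) \<and> (\<forall>m<n. F (rat_enum m) = H (rat_enum m)))"

lemma rat_enum_surj: "x \<in> \<rat> \<Longrightarrow> \<exists>n. rat_enum n = x"
proof -
  assume "x \<in> \<rat>"
  then obtain k where "from_nat_into \<rat> k = x" using from_nat_into_surj[OF countable_rat] by blast
  then have "rat_enum (Suc k) = x" by (simp add: rat_enum_def)
  then show ?thesis ..
qed

lemma continuous_eq_if_eq_on_rat_enum:
  fixes F H :: "real \<Rightarrow> real"
  assumes "continuous_on UNIV F" "continuous_on UNIV H" and "\<And>n. F (rat_enum n) = H (rat_enum n)"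
  shows "F = H"
proof -
  have "continuous_on (closure \<rat>) (\<lambda>x. F x - H x)"
    using assms(1,2) by (auto intro: continuous_on_diff continuous_on_subset)
  moreover have "F x - H x = 0" if "x \<in> \<rat>" for x
    using rat_enum_surj[OF that] assms(3) by auto
  ultimately have "F x - H x = 0" for x
    using continuous_constant_on_closure[of \<rat> "\<lambda>x. F x - H x" 0 x] by (simp add: Rats_closure_real)
  then show ?thesis by auto
qed

lemma lex_less_total:
  assumes "continuous_on UNIV F" "continuous_on UNIV H" and "F \<noteq> H"
  shows "lex_less F H \<or> lex_less H F"
proof -
  have "\<exists>n. F (rat_enum n) \<noteq> H (rat_enum n)"
    using continuous_eq_if_eq_on_rat_enum assms by blast
  then obtain n where n: "F (rat_enum n) \<noteq> H (rat_enum n)" "\<forall>m<n. F (rat_enum m) = H (rat_enum m)"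
    using exists_least_iff[of "\<lambda>n. F (rat_enum n) \<noteq> H (rat_enum n)"] by blast
  then have "F (rat_enum n) < H (rat_enum n) \<or> H (rat_enum n) < F (rat_enum n)"
    by linarith
  with n show ?thesis unfolding lex_less_def by auto
qed

lemma lex_less_asym: "lex_less F H \<Longrightarrow> \<not> lex_less H F"
proof
  assume "lex_less F H" "lex_less H F"
  then obtain n1 n2
    where a: "F (rat_enum n1) < H (rat_enum n1)" "\<forall>m<n1. F (rat_enum m) = H (rat_enum m)"
      and b: "H (rat_enum n2) < F (rat_enum n2)" "\<forall>m<n2. H (rat_enum m) = F (rat_enum m)"
    unfolding lex_less_def by blast
  then show False by (cases n1 n2 rule: linorder_cases) force+
qed

lemma lex_less_trans: "lex_less F H \<Longrightarrow> lex_less H K \<Longrightarrow> lex_less F K"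
proof -
  assume "lex_less F H" "lex_less H K"
  then obtain n1 n2
    where a: "F (rat_enum n1) < H (rat_enum n1)" "\<forall>m<n1. F (rat_enum m) = H (rat_enum m)"
      and b: "H (rat_enum n2) < K (rat_enum n2)" "\<forall>m<n2. H (rat_enum m) = K (rat_enum m)"
    unfolding lex_less_def by blast
  show ?thesis unfolding lex_less_def
    using a b by (intro exI[of _ "min n1 n2"]) (cases n1 n2 rule: linorder_cases; simp)
qed

lemma lex_less_comp:
  assumes "strict_mono K" and "lex_less F H"
  shows "lex_less (K \<circ> F) (K \<circ> H)"
proof -
  obtain n where "F (rat_enum n) < H (rat_enum n)" "\<forall>m<n. F (rat_enum m) = H (rat_enum m)"
    using assms(2) unfolding lex_less_def by blast
  then have "(K \<circ> F) (rat_enum n) < (K \<circ> H) (rat_enum n)"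
    "\<forall>m<n. (K \<circ> F) (rat_enum m) = (K \<circ> H) (rat_enum m)"
    using strict_monoD[OF assms(1)] by auto
  then show ?thesis unfolding lex_less_def by blast
qed

lemma lex_less_if_less_at_0: "F 0 < H 0 \<Longrightarrow> lex_less F H"
  unfolding lex_less_def by (intro exI[of _ 0]) (simp add: rat_enum_def)

lemma lex_less_imp_le_at_0: "lex_less F H \<Longrightarrow> F 0 \<le> H 0"
  unfolding lex_less_def
proof (elim exE conjE)
  fix n assume "F (rat_enum n) < H (rat_enum n)" "\<forall>m<n. F (rat_enum m) = H (rat_enum m)"
  then show "F 0 \<le> H 0" by (cases "n = 0") (auto simp: rat_enum_def)
qed

context group
begin

lemma right_mult_funpow: "x \<in> carrier G \<Longrightarrow> t \<in> carrier G \<Longrightarrow> ((\<lambda>x. x \<otimes> t) ^^ n) x = x \<otimes> t [^] n"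
  by (induction n) (simp_all add: m_assoc)

lemma bij_betw_right_mult: "t \<in> carrier G \<Longrightarrow> bij_betw (\<lambda>x. x \<otimes> t) (carrier G) (carrier G)"
proof (intro bij_betw_imageI inj_on_multc equalityI subsetI)
  fix y assume "t \<in> carrier G" "y \<in> carrier G"
  then have "y = (y \<otimes> inv t) \<otimes> t" "y \<otimes> inv t \<in> carrier G" by (simp_all add: m_assoc)
  then show "y \<in> (\<lambda>x. x \<otimes> t) ` carrier G" by blast
qed auto

lemma induced_le_imp_rel: "a \<in> carrier G \<Longrightarrow> b \<in> carrier G \<Longrightarrow> induced_le G rel a b \<Longrightarrow> rel a b"
  unfolding induced_le_def by (metis l_one one_closed r_one)

lemma group_center_inv:
  assumes "z \<in> group_center G"
  shows "inv z \<in> group_center G"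
proof -
  have z: "z \<in> carrier G" and comm: "\<And>g. g \<in> carrier G \<Longrightarrow> z \<otimes> g = g \<otimes> z"
    using assms by (auto simp: group_center_def)
  have "inv z \<otimes> g = g \<otimes> inv z" if g: "g \<in> carrier G" for g
  proof -
    have "inv z \<otimes> g = inv z \<otimes> ((g \<otimes> z) \<otimes> inv z)" using z g by (simp add: m_assoc)
    also have "\<dots> = inv z \<otimes> ((z \<otimes> g) \<otimes> inv z)" using comm[OF g] by simp
    also have "\<dots> = g \<otimes> inv z" using z g by (simp add: m_assoc[symmetric])
    finally show ?thesis .
  qed
  then show ?thesis using z by (simp add: group_center_def)
qed

lemma realizes_right_mult:
  assumes "left_invariant G rel" and t: "t \<in> carrier G" and "rel t t"
    and "growth_multiples G (induced_le G rel) f"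
  shows "realizes G rel (\<lambda>x. x \<otimes> t) f"
  unfolding realizes_def
proof (intro conjI)
  show "\<forall>g\<in>carrier G. \<forall>x\<in>carrier G. g \<otimes> x \<otimes> t = g \<otimes> (x \<otimes> t)"
    using t by (simp add: m_assoc)
  show "\<forall>g\<in>carrier G. (\<forall>x\<in>carrier G. g \<otimes> x = x) \<longrightarrow> g = \<one>"
    using one_closed r_one by metis
  show "\<exists>g\<in>carrier G. \<exists>x\<in>carrier G. \<exists>n\<ge>1. rel (((\<lambda>x. x \<otimes> t) ^^ n) x) (g \<otimes> x)"
    using t \<open>rel t t\<close> by (intro bexI[of _ t] bexI[of _ \<one>] exI[of _ 1]) auto
qed (fact assms)+

lemma quasi_total_triple_right_mult:
  assumes "partial_order_on_carrier (carrier G) rel" and t: "t \<in> carrier G"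
    and right_mono: "\<And>a b. a \<in> carrier G \<Longrightarrow> b \<in> carrier G \<Longrightarrow>
                       rel a b \<Longrightarrow> rel (a \<otimes> t) (b \<otimes> t)"
    and dominant: "\<And>a b. a \<in> carrier G \<Longrightarrow> b \<in> carrier G \<Longrightarrow>
                      \<exists>n::nat\<ge>1. rel b (a \<otimes> t [^] n) \<and> a \<otimes> t [^] n \<noteq> b"
    and bounded: "\<exists>N::nat. \<forall>a\<in>carrier G. \<forall>b\<in>carrier G.
                      \<exists>k\<le>N. rel a (b \<otimes> t [^] k) \<or> rel b (a \<otimes> t [^] k)"
  shows "quasi_total_triple (carrier G) rel (\<lambda>x. x \<otimes> t)"
  unfolding quasi_total_triple_def dominant_map_def order_preserving_bij_def
proof (intro conjI)
  show "bij_betw (\<lambda>x. x \<otimes> t) (carrier G) (carrier G)" using t by (rule bij_betw_right_mult)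
  show "\<forall>a\<in>carrier G. \<forall>b\<in>carrier G. rel a b \<longrightarrow> rel (a \<otimes> t) (b \<otimes> t)"
    using right_mono by blast
  show "\<forall>a\<in>carrier G. \<forall>b\<in>carrier G.
          \<exists>n\<ge>1. rel b (((\<lambda>x. x \<otimes> t) ^^ n) a) \<and> ((\<lambda>x. x \<otimes> t) ^^ n) a \<noteq> b"
  proof (intro ballI)
    fix a b assume a: "a \<in> carrier G" and b: "b \<in> carrier G"
    show "\<exists>n\<ge>1. rel b (((\<lambda>x. x \<otimes> t) ^^ n) a) \<and> ((\<lambda>x. x \<otimes> t) ^^ n) a \<noteq> b"
      unfolding right_mult_funpow[OF a t] using dominant[OF a b] .
  qed
  show "\<exists>N. \<forall>a\<in>carrier G. \<forall>b\<in>carrier G.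
          \<exists>k\<le>N. rel a (((\<lambda>x. x \<otimes> t) ^^ k) b) \<or> rel b (((\<lambda>x. x \<otimes> t) ^^ k) a)"
    using bounded by (simp add: right_mult_funpow[OF _ t])
qed (fact assms)

end

lemma LIMSEQ_if_abs_diff_le_const_over_n:
  fixes x :: "nat \<Rightarrow> real"
  assumes "\<And>n. n \<ge> 1 \<Longrightarrow> \<bar>x n - L\<bar> \<le> C / real n"
  shows "x \<longlonglongrightarrow> L"
proof -
  have "(\<lambda>n. x n - L) \<longlonglongrightarrow> 0"
  proof (rule Lim_null_comparison)
    show "\<forall>\<^sub>F n in sequentially. norm (x n - L) \<le> C / real n"
      using assms by (auto simp: eventually_sequentially)
  qed (rule lim_const_over_n)
  then show ?thesis by (simp add: LIM_zero_cancel)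
qed

lemma ex_nat_ge_1_mult_gt:
  assumes "(c::real) > 0"
  shows "\<exists>n::nat. n \<ge> 1 \<and> real n * c > X"
proof -
  obtain n :: nat where "X < real n * c" using reals_Archimedean3[OF assms] by blast
  then have "X < real (Suc n) * c" using assms by (simp add: algebra_simps)
  then show ?thesis by (intro exI[of _ "Suc n"]) simp
qed

locale circular_representation = group G for G (structure) +
  fixes \<phi> :: "'a \<Rightarrow> real \<Rightarrow> real" and f :: "'a \<Rightarrow> real"
  assumes homeo_Z_phi: "g \<in> carrier G \<Longrightarrow> homeo_Z (\<phi> g)"
    and phi_mult: "g \<in> carrier G \<Longrightarrow> h \<in> carrier G \<Longrightarrow> \<phi> (g \<otimes> h) = \<phi> g \<circ> \<phi> h"
    and inj_on_phi: "inj_on \<phi> (carrier G)"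
    and f_eq_transl_num: "g \<in> carrier G \<Longrightarrow> f g = transl_num (\<phi> g)"
    and homogeneous: "homogeneous_qm G f"
    and f_nonzero: "\<exists>g\<in>carrier G. f g \<noteq> 0"
begin

lemma phi_mult_apply: "g \<in> carrier G \<Longrightarrow> h \<in> carrier G \<Longrightarrow> \<phi> (g \<otimes> h) y = \<phi> g (\<phi> h y)"
  by (simp add: phi_mult)

lemma phi_strict_mono: "g \<in> carrier G \<Longrightarrow> strict_mono (\<phi> g)"
  by (rule homeo_Z_strict_mono[OF homeo_Z_phi])

lemma phi_displacement: "g \<in> carrier G \<Longrightarrow> \<bar>\<phi> g y - y - \<phi> g 0\<bar> \<le> 1"
  by (rule degree_one_displacement[OF homeo_Z_imp_degree_one[OF homeo_Z_phi]])

lemma phi_one: "\<phi> \<one> = id"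
proof
  fix y
  have "\<phi> \<one> (\<phi> \<one> y) = \<phi> \<one> y" using phi_mult_apply[of \<one> \<one> y] by simp
  then show "\<phi> \<one> y = id y" using strict_mono_eq[OF phi_strict_mono[of \<one>]] by simp
qed

lemma phi_nat_pow: "g \<in> carrier G \<Longrightarrow> \<phi> (g [^] (n::nat)) = \<phi> g ^^ n"
  by (induction n) (simp_all add: phi_one phi_mult fun_eq_iff funpow_swap1)

lemma f_inv: "g \<in> carrier G \<Longrightarrow> f (inv g) = - f g"
  using homogeneous int_pow_neg[of g 1] unfolding homogeneous_qm_def
  by (metis int_pow_1 mult_minus1 of_int_minus of_int_1)

lemma phi_int_pow_displacement:
  assumes g: "g \<in> carrier G"
  shows "\<bar>\<phi> (g [^] (p::int)) y - y - of_int p * f g\<bar> \<le> 2"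
proof (cases "p \<ge> 0")
  case True
  then obtain n where "p = int n" by (metis nonneg_eq_int)
  then show ?thesis
    using homeo_Z_funpow_transl_num[OF homeo_Z_phi[OF g], of n y]
    by (simp add: int_pow_int phi_nat_pow[OF g] f_eq_transl_num[OF g])
next
  case False
  then obtain n where p: "p = - int n" by (metis neg_0_le_iff_le nonneg_eq_int le_cases minus_minus)
  have "g [^] p = inv g [^] n" using g p by (simp add: int_pow_neg_int nat_pow_inv)
  then show ?thesis
    using homeo_Z_funpow_transl_num[OF homeo_Z_phi[OF inv_closed[OF g]], of n y] g p
    by (simp add: phi_nat_pow f_eq_transl_num[symmetric] f_inv)
qed

lemma phi_nat_pow_displacement:
  "g \<in> carrier G \<Longrightarrow> \<bar>\<phi> (g [^] (n::nat)) y - y - real n * f g\<bar> \<le> 2"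
  using phi_int_pow_displacement[of g "int n" y] by (simp add: int_pow_int)

lemma ex_f_pos: "\<exists>t\<in>carrier G. f t > 0"
  using f_nonzero f_inv by (metis inv_closed neg_0_less_iff_less not_less_iff_gr_or_eq)

lemma phi_less_right_mult_pow:
  assumes a: "a \<in> carrier G" and b: "b \<in> carrier G" and t: "t \<in> carrier G"
    and n: "real n * f t > \<phi> b 0 - \<phi> a 0 + 4"
  shows "\<phi> b y < \<phi> (a \<otimes> t [^] n) y"
proof -
  define z where "z = \<phi> (t [^] n) y"
  have "z \<ge> y + real n * f t - 2"
    using phi_nat_pow_displacement[OF t, of n y] unfolding z_def by simp
  moreover have "\<phi> (a \<otimes> t [^] n) y = \<phi> a z" using a t by (simp add: phi_mult_apply z_def)
  moreover have "\<phi> a z \<ge> z + \<phi> a 0 - 1" "\<phi> b y \<le> y + \<phi> b 0 + 1"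
    using phi_displacement[OF a, of z] phi_displacement[OF b, of y] by simp_all
  ultimately show ?thesis using n by simp
qed

lemma ex_uniformly_less_right_mult_pow:
  assumes "a \<in> carrier G" "b \<in> carrier G" "t \<in> carrier G" "f t > 0"
  shows "\<exists>n::nat\<ge>1. \<forall>y. \<phi> b y < \<phi> (a \<otimes> t [^] n) y"
  using ex_nat_ge_1_mult_gt[OF assms(4)] phi_less_right_mult_pow[OF assms(1-3)] by blast

context
  fixes le :: "'a \<Rightarrow> 'a \<Rightarrow> bool"
  assumes le_imp_le_at_0: "\<And>a b. a \<in> carrier G \<Longrightarrow> b \<in> carrier G \<Longrightarrow> le a b \<Longrightarrow> \<phi> a 0 \<le> \<phi> b 0"
    and uniformly_less_imp_le:
      "\<And>a b. a \<in> carrier G \<Longrightarrow> b \<in> carrier G \<Longrightarrow> (\<forall>y. \<phi> a y < \<phi> b y) \<Longrightarrow> le a b"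
begin

lemma dominant_elem_f_pos:
  assumes "dominant_elem G le g"
  shows "f g > 0"
proof (rule ccontr)
  assume "\<not> f g > 0"
  have g: "g \<in> carrier G" and dom: "\<forall>h\<in>carrier G. \<exists>n::nat. le h (g [^] n)"
    using assms by (auto simp: dominant_elem_def)
  obtain t where t: "t \<in> carrier G" "f t > 0" using ex_f_pos by blast
  obtain m :: nat where "real m * f t > 5" using ex_nat_ge_1_mult_gt[OF t(2)] by blast
  then have "\<phi> (t [^] m) 0 \<ge> 3" using phi_nat_pow_displacement[OF t(1), of m 0] by simp
  moreover obtain n :: nat where "le (t [^] m) (g [^] n)" using dom t(1) by blast
  then have "\<phi> (t [^] m) 0 \<le> \<phi> (g [^] n) 0" using le_imp_le_at_0 g t(1) by simp
  moreover have "real n * f g \<le> 0" using \<open>\<not> f g > 0\<close> by (simp add: mult_nonneg_nonpos)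
  then have "\<phi> (g [^] n) 0 \<le> 2" using phi_nat_pow_displacement[OF g, of n 0] by simp
  ultimately show False by simp
qed

lemma growth_seq_close:
  assumes g: "g \<in> carrier G" and fg: "f g > 0" and h: "h \<in> carrier G" and n: "n \<ge> 1"
  shows "\<bar>growth_seq G le g h n - f h / f g\<bar> \<le> (4 / f g + 1) / real n"
proof -
  define S where "S = {p::int. le (h [^] n) (g [^] p)}"
  have hn: "h [^] n \<in> carrier G" using h by simp
  have h_disp: "\<bar>\<phi> (h [^] n) y - y - real n * f h\<bar> \<le> 2" for y
    using phi_nat_pow_displacement[OF h] .
  have lower: "(real n * f h - 4) / f g \<le> of_int p" if "p \<in> S" for p
  proof -
    have "\<phi> (h [^] n) 0 \<le> \<phi> (g [^] p) 0" using le_imp_le_at_0[OF hn] that g by (simp add: S_def)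
    then show ?thesis
      using h_disp[of 0] phi_int_pow_displacement[OF g, of p 0] fg by (simp add: field_simps)
  qed
  define p0 where "p0 = \<lfloor>(real n * f h + 4) / f g\<rfloor> + 1"
  have "p0 \<in> S"
  proof -
    have "of_int p0 > (real n * f h + 4) / f g" unfolding p0_def by linarith
    then have "of_int p0 * f g > real n * f h + 4" using fg by (simp add: field_simps)
    then have "\<phi> (h [^] n) y < \<phi> (g [^] p0) y" for y
      using h_disp[of y] phi_int_pow_displacement[OF g, of p0 y] by simp
    then show ?thesis using uniformly_less_imp_le[OF hn] g by (simp add: S_def)
  qed
  have S_lower: "\<lceil>(real n * f h - 4) / f g\<rceil> \<le> p" if "p \<in> S" for p
    using lower[OF that] by (simp add: ceiling_le_iff)
  then have "Inf S \<le> p0" using \<open>p0 \<in> S\<close> by (intro cInf_lower bdd_belowI)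
  have "\<lceil>(real n * f h - 4) / f g\<rceil> \<le> Inf S"
    using \<open>p0 \<in> S\<close> S_lower by (intro cInf_greatest) auto
  have "real_of_int p0 \<le> real n * (f h / f g) + (4 / f g + 1)"
    unfolding p0_def by (simp add: add_divide_distrib)
  then have upper: "real_of_int (Inf S) \<le> real n * (f h / f g) + (4 / f g + 1)"
    using \<open>Inf S \<le> p0\<close> by linarith
  have "real n * (f h / f g) - 4 / f g \<le> real_of_int (Inf S)"
    using \<open>\<lceil>(real n * f h - 4) / f g\<rceil> \<le> Inf S\<close> by (simp add: diff_divide_distrib) linarith
  with upper have "\<bar>real_of_int (Inf S) - real n * (f h / f g)\<bar> \<le> 4 / f g + 1"
    using fg by (simp add: abs_le_iff)
  moreover have "\<bar>real_of_int (Inf S) / real n - f h / f g\<bar>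
                   = \<bar>real_of_int (Inf S) - real n * (f h / f g)\<bar> / real n"
    using n by (simp add: field_simps abs_divide)
  ultimately show ?thesis
    using n by (simp add: growth_seq_def S_def divide_right_mono)
qed

lemma growth_multiples_if_sandwiched: "growth_multiples G le f"
  unfolding growth_multiples_def
proof (intro allI impI exI ballI)
  fix g h assume "dominant_elem G le g" "h \<in> carrier G"
  then have "g \<in> carrier G" "f g > 0"
    using dominant_elem_f_pos by (auto simp: dominant_elem_def)
  then have "growth_seq G le g h \<longlonglongrightarrow> f h / f g"
    using growth_seq_close \<open>h \<in> carrier G\<close> by (intro LIMSEQ_if_abs_diff_le_const_over_n)
  then show "growth_seq G le g h \<longlonglongrightarrow> 1 / f g * f h" by simp
qed

end

lemma growth_multiples_induced_le:
  assumes "\<And>a b. a \<in> carrier G \<Longrightarrow> b \<in> carrier G \<Longrightarrow> rel a b \<Longrightarrow> \<phi> a 0 \<le> \<phi> b 0"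
    and "\<And>a b. a \<in> carrier G \<Longrightarrow> b \<in> carrier G \<Longrightarrow> (\<forall>y. \<phi> a y < \<phi> b y) \<Longrightarrow> rel a b"
  shows "growth_multiples G (induced_le G rel) f"
proof (rule growth_multiples_if_sandwiched)
  show "\<phi> a 0 \<le> \<phi> b 0" if "a \<in> carrier G" "b \<in> carrier G" "induced_le G rel a b" for a b
    using that assms(1) induced_le_imp_rel by blast
  show "induced_le G rel a b" if ab: "a \<in> carrier G" "b \<in> carrier G" "\<forall>y. \<phi> a y < \<phi> b y" for a b
    unfolding induced_le_def
  proof (intro ballI)
    fix k x assume kx: "k \<in> carrier G" "x \<in> carrier G"
    have "\<phi> ((k \<otimes> a) \<otimes> x) y < \<phi> ((k \<otimes> b) \<otimes> x) y" for y
      using kx ab strict_monoD[OF phi_strict_mono[OF kx(1)]] by (simp add: phi_mult_apply)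
    then show "rel ((k \<otimes> a) \<otimes> x) ((k \<otimes> b) \<otimes> x)" using assms(2) kx ab by simp
  qed
qed

definition uniform_le :: "'a \<Rightarrow> 'a \<Rightarrow> bool" where
  "uniform_le a b \<longleftrightarrow> a = b \<or> (\<forall>y. \<phi> a y < \<phi> b y)"

definition lex_le :: "'a \<Rightarrow> 'a \<Rightarrow> bool" where
  "lex_le a b \<longleftrightarrow> a = b \<or> lex_less (\<phi> a) (\<phi> b)"

lemma uniform_le_partial_order: "partial_order_on_carrier (carrier G) uniform_le"
  unfolding partial_order_on_carrier_def uniform_le_def
proof (intro conjI ballI impI)
  fix a b assume "(a = b \<or> (\<forall>y. \<phi> a y < \<phi> b y)) \<and> (b = a \<or> (\<forall>y. \<phi> b y < \<phi> a y))"
  then show "a = b" using less_asym by blast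
qed (auto intro: less_trans)

lemma uniform_le_left_invariant: "left_invariant G uniform_le"
  unfolding left_invariant_def
proof (intro ballI impI)
  fix g a b assume "g \<in> carrier G" "a \<in> carrier G" "b \<in> carrier G" "uniform_le a b"
  then show "uniform_le (g \<otimes> a) (g \<otimes> b)"
    using strict_monoD[OF phi_strict_mono[of g]] unfolding uniform_le_def
    by (auto simp: phi_mult_apply)
qed

lemma uniform_le_right_mult:
  "a \<in> carrier G \<Longrightarrow> b \<in> carrier G \<Longrightarrow> t \<in> carrier G \<Longrightarrow> uniform_le a b \<Longrightarrow>
   uniform_le (a \<otimes> t) (b \<otimes> t)"
  unfolding uniform_le_def by (auto simp: phi_mult_apply)

lemma uniform_le_growth_multiples: "growth_multiples G (induced_le G uniform_le) f"
  by (rule growth_multiples_induced_le) (auto simp: uniform_le_def less_imp_le)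

lemma uniform_le_dominant:
  assumes "a \<in> carrier G" "b \<in> carrier G" "t \<in> carrier G" "f t > 0"
  shows "\<exists>n::nat\<ge>1. uniform_le b (a \<otimes> t [^] n) \<and> a \<otimes> t [^] n \<noteq> b"
  using ex_uniformly_less_right_mult_pow[OF assms] unfolding uniform_le_def by (metis less_irrefl)

lemma uniform_le_quasi_total_triple:
  assumes t: "t \<in> carrier G" and "f t > 0"
  shows "quasi_total_triple (carrier G) uniform_le (\<lambda>x. x \<otimes> t)"
proof (rule quasi_total_triple_right_mult[OF uniform_le_partial_order t])
  obtain N :: nat where N: "real N * f t > 6" using ex_nat_ge_1_mult_gt[OF \<open>f t > 0\<close>] by blast
  have "uniform_le a (b \<otimes> t [^] N) \<or> uniform_le b (a \<otimes> t [^] N)"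
    if "a \<in> carrier G" "b \<in> carrier G" for a b
    using phi_less_right_mult_pow[OF that(1,2) t, of N] phi_less_right_mult_pow[OF that(2,1) t, of N] N
    unfolding uniform_le_def by (cases "\<phi> b 0 - \<phi> a 0 \<le> 2") auto
  then show "\<exists>N::nat. \<forall>a\<in>carrier G. \<forall>b\<in>carrier G.
               \<exists>k\<le>N. uniform_le a (b \<otimes> t [^] k) \<or> uniform_le b (a \<otimes> t [^] k)"
    by blast
qed (use uniform_le_right_mult uniform_le_dominant assms in auto)

lemma lex_le_left_inv_total_order: "left_inv_total_order G lex_le"
  unfolding left_inv_total_order_def total_order_on_carrier_def partial_order_on_carrier_def
    left_invariant_def
proof (intro conjI ballI impI)
  fix a b assume a: "a \<in> carrier G" and b: "b \<in> carrier G"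
  show "lex_le a b \<or> lex_le b a"
  proof (cases "a = b")
    case False
    then have "\<phi> a \<noteq> \<phi> b" using inj_on_phi a b by (meson inj_onD)
    then show ?thesis
      using lex_less_total[OF homeo_Z_continuous[OF homeo_Z_phi[OF a]]
                              homeo_Z_continuous[OF homeo_Z_phi[OF b]]]
      unfolding lex_le_def by blast
  qed (simp add: lex_le_def)
next
  fix g a b assume "g \<in> carrier G" "a \<in> carrier G" "b \<in> carrier G" "lex_le a b"
  then show "lex_le (g \<otimes> a) (g \<otimes> b)"
    using lex_less_comp[OF phi_strict_mono[of g]] unfolding lex_le_def by (auto simp: phi_mult)
next
  fix a b assume "lex_le a b \<and> lex_le b a"
  then show "a = b" using lex_less_asym unfolding lex_le_def by blast
next
  fix a b c assume "lex_le a b \<and> lex_le b c"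
  then show "lex_le a c" using lex_less_trans unfolding lex_le_def by blast
qed (simp add: lex_le_def)

lemma uniform_le_imp_lex_le: "uniform_le a b \<Longrightarrow> lex_le a b"
  unfolding uniform_le_def lex_le_def using lex_less_if_less_at_0 by blast

lemma lex_le_refines_uniform_le: "refines (carrier G) lex_le uniform_le"
  using lex_le_left_inv_total_order uniform_le_imp_lex_le
  unfolding refines_def left_inv_total_order_def total_order_on_carrier_def by blast

lemma lex_le_growth_multiples: "growth_multiples G (induced_le G lex_le) f"
proof (rule growth_multiples_induced_le)
  show "\<phi> a 0 \<le> \<phi> b 0" if "lex_le a b" for a b
    using that lex_less_imp_le_at_0 unfolding lex_le_def by blast
  show "lex_le a b" if "\<forall>y. \<phi> a y < \<phi> b y" for a b
    using that uniform_le_imp_lex_le unfolding uniform_le_def by blast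
qed

lemma lex_le_total_triple:
  assumes t: "t \<in> group_center G" and "f t > 0"
  shows "total_triple (carrier G) lex_le (\<lambda>x. x \<otimes> t)"
proof -
  have tG: "t \<in> carrier G" and comm: "\<And>g. g \<in> carrier G \<Longrightarrow> t \<otimes> g = g \<otimes> t"
    using t by (auto simp: group_center_def)
  have tot: "total_order_on_carrier (carrier G) lex_le" and li: "left_invariant G lex_le"
    using lex_le_left_inv_total_order by (auto simp: left_inv_total_order_def)
  have "quasi_total_triple (carrier G) lex_le (\<lambda>x. x \<otimes> t)"
  proof (rule quasi_total_triple_right_mult[OF _ tG])
    show "lex_le (a \<otimes> t) (b \<otimes> t)" if "a \<in> carrier G" "b \<in> carrier G" "lex_le a b" for a b
      using li that tG comm unfolding left_invariant_def by metis
    show "\<exists>n::nat\<ge>1. lex_le b (a \<otimes> t [^] n) \<and> a \<otimes> t [^] n \<noteq> b"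
      if "a \<in> carrier G" "b \<in> carrier G" for a b
      using uniform_le_dominant[OF that tG \<open>f t > 0\<close>] uniform_le_imp_lex_le by blast
    show "\<exists>N::nat. \<forall>a\<in>carrier G. \<forall>b\<in>carrier G.
            \<exists>k\<le>N. lex_le a (b \<otimes> t [^] k) \<or> lex_le b (a \<otimes> t [^] k)"
      using tot by (intro exI[of _ 0]) (auto simp: total_order_on_carrier_def)
  qed (use tot in \<open>simp add: total_order_on_carrier_def\<close>)
  with tot show ?thesis by (simp add: total_triple_def)
qed

lemma uniform_le_realizes: "t \<in> carrier G \<Longrightarrow> realizes G uniform_le (\<lambda>x. x \<otimes> t) f"
  using uniform_le_left_invariant uniform_le_growth_multiples
  by (intro realizes_right_mult) (auto simp: uniform_le_def)

lemma lex_le_realizes: "t \<in> carrier G \<Longrightarrow> realizes G lex_le (\<lambda>x. x \<otimes> t) f"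
  using lex_le_left_inv_total_order lex_le_growth_multiples
  by (intro realizes_right_mult) (auto simp: left_inv_total_order_def lex_le_def)

lemma ex_central_f_pos:
  assumes "\<not> (\<exists>B. \<forall>z\<in>group_center G. \<bar>f z\<bar> \<le> B)"
  shows "\<exists>s\<in>group_center G. f s > 0"
proof -
  obtain z where z: "z \<in> group_center G" "f z \<noteq> 0"
    using assms by (metis abs_le_zero_iff)
  have "f (inv z) = - f z" using z(1) f_inv by (simp add: group_center_def)
  then show ?thesis
  proof (cases "f z > 0")
    case False
    with z \<open>f (inv z) = - f z\<close> have "f (inv z) > 0" by simp
    with group_center_inv[OF z(1)] show ?thesis by blast
  qed (use z in blast)
qed

end

theorem proposition4p6:
  fixes G :: "('a, 'b) monoid_scheme" and f :: "'a \<Rightarrow> real"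
  assumes "group G" and "circular_qm G f"
  shows "(\<exists>rel. left_inv_total_order G rel \<and> growth_multiples G (induced_le G rel) f)
       \<and> (\<exists>rel0 T rel. quasi_total_triple (carrier G) rel0 T \<and> realizes G rel0 T f \<and>
                     refines (carrier G) rel rel0 \<and> left_inv_total_order G rel)
       \<and> ((\<not> (\<exists>B. \<forall>z\<in>group_center G. \<bar>f z\<bar> \<le> B)) \<longrightarrow>
           (\<exists>rel T. total_triple (carrier G) rel T \<and> realizes G rel T f))"
proof -
  obtain \<phi> where "circular_representation G \<phi> f"
    using assms unfolding circular_qm_def circular_representation_def circular_representation_axioms_def
    by blast
  then interpret circular_representation G \<phi> f .
  obtain t where t: "t \<in> carrier G" "f t > 0" using ex_f_pos by blast
  have "\<exists>rel T. total_triple (carrier G) rel T \<and> realizes G rel T f"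
    if unbounded: "\<not> (\<exists>B. \<forall>z\<in>group_center G. \<bar>f z\<bar> \<le> B)"
  proof -
    obtain s where s: "s \<in> group_center G" "f s > 0" using ex_central_f_pos[OF unbounded] by blast
    then have "s \<in> carrier G" by (simp add: group_center_def)
    with s show ?thesis using lex_le_total_triple lex_le_realizes by blast
  qed
  then show ?thesis
    using lex_le_left_inv_total_order lex_le_growth_multiples lex_le_refines_uniform_le
      uniform_le_quasi_total_triple[OF t] uniform_le_realizes[OF t(1)]
    by blast
qed

end
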